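(* Suppose $\mathcal U(x)=\{(u_0,u_1)\in(\mathbb R^{n^0_u}_+\times\mathbb U_{d_0})\times(\mathbb R^{n^1_u}_+\times\mathbb U_{d_1}): F_0(x)u_0+F_1(x)u_1\le h+Gx\}$ and let $\mathcal U_1(x,u_0)=\{u_1\in\mathbb R^{n^1_u}_+\times\mathbb U_{d_1}: F_1(x)u_1\le h+Gx-F_0(x)u_0\}$. Define $w_{(u_0,u_1)}=\min_{x\in\mathcal X,\ (u_0,u_1')\in\mathcal U(x)}\Big[c_1x+\max_{u_1\in\mathcal U_1(x,u_0)}\min_{y\in\mathcal Y(x,(u_0,u_1))}c_2y\Big]$, where $u_1'$ is a copy (replicate) of the variable $u_1$ used only in the outer minimization. Then $w_R\le w_{(u_0,u_1)}\le w^*$, and if $w_{(u_0,u_1)}=+\infty$ then $w^*=+\infty$.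
   Context: $\mathcal X=\{x\in\mathbb R^{n_x}_+\times\mathbb Z^{m_x}_+: Ax\ge b\}$; $\mathbb U_{d_0},\mathbb U_{d_1}$ are bounded sets of nonnegative integer vectors; $F_0(x),F_1(x)$ depend on $x$; $\mathcal Y(x,u)=\{y=(y_c,y_d)\in\mathbb R^{n_y}_+\times\mathbb Y_d: B_{2,c}y_c+B_{2,d}y_d\ge d-B_1x-Eu\}$ with $\mathbb Y_d\subseteq\mathbb Z^{m_y}_+$ bounded; $c_1,c_2$ row vectors; a minimum over an empty set is $+\infty$. $w^*=\min_{x\in\mathcal X}\big[c_1x+\max_{u\in\mathcal U(x)}\min_{y\in\mathcal Y(x,u)}c_2y\big]$ and $w_R=\min\{c_1x+c_2y: x\in\mathcal X,u\in\mathcal U(x),y\in\mathcal Y(x,u)\}$. Standing assumptions: $\mathcal U(x)\neq\emptyset$ and bounded for all $x\in\mathcal X$, and $w_R>-\infty$. *)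

theory Defs
  imports "HOL-Analysis.Analysis"
begin

text \<open>Vectors of mixed continuous/discrete variables are indexed by a sum type
  'c + 'd: the Inl-indices are the continuous components, the Inr-indices the
  discrete ones. Vector inequalities are componentwise (library order on vec).\<close>

definition nonneg_int_vecs :: "(real^'d::finite) set" where
  "nonneg_int_vecs = {v. \<forall>j. v $ j \<in> \<int> \<and> 0 \<le> v $ j}"

definition dpart :: "real^('c::finite + 'd::finite) \<Rightarrow> real^'d" where
  "dpart u = (\<chi> j. u $ Inr j)"

definition mixset :: "(real^'d::finite) set \<Rightarrow> (real^('c::finite + 'd)) set" where
  "mixset D = {u. (\<forall>j. 0 \<le> u $ Inl j) \<and> dpart u \<in> D}"

definition vjoin :: "real^'a::finite \<Rightarrow> real^'b::finite \<Rightarrow> real^('a + 'b)" where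
  "vjoin u v = (\<chi> i. case i of Inl a \<Rightarrow> u $ a | Inr b \<Rightarrow> v $ b)"

definition Xset :: "real^('nx::finite + 'mx::finite)^'r::finite \<Rightarrow> real^'r \<Rightarrow> (real^('nx + 'mx)) set" where
  "Xset A b = {x. (\<forall>i. 0 \<le> x $ i) \<and> (\<forall>j. x $ Inr j \<in> \<int>) \<and> b \<le> A *v x}"

definition Uset ::
  "('x \<Rightarrow> real^('n0::finite + 'd0::finite)^'k::finite) \<Rightarrow> ('x \<Rightarrow> real^('n1::finite + 'd1::finite)^'k) \<Rightarrow> real^'k \<Rightarrow>
   ('x \<Rightarrow> real^'k) \<Rightarrow> (real^'d0) set \<Rightarrow> (real^'d1) set \<Rightarrow> 'x \<Rightarrow>
   ((real^('n0 + 'd0)) \<times> (real^('n1 + 'd1))) set" where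
  "Uset F0 F1 h Gx Ud0 Ud1 x =
     {(u0, u1). u0 \<in> mixset Ud0 \<and> u1 \<in> mixset Ud1 \<and>
                F0 x *v u0 + F1 x *v u1 \<le> h + Gx x}"

definition U1set ::
  "('x \<Rightarrow> real^('n0::finite + 'd0::finite)^'k::finite) \<Rightarrow> ('x \<Rightarrow> real^('n1::finite + 'd1::finite)^'k) \<Rightarrow> real^'k \<Rightarrow>
   ('x \<Rightarrow> real^'k) \<Rightarrow> (real^'d1) set \<Rightarrow> 'x \<Rightarrow> real^('n0 + 'd0) \<Rightarrow>
   (real^('n1 + 'd1)) set" where
  "U1set F0 F1 h Gx Ud1 x u0 =
     {u1. u1 \<in> mixset Ud1 \<and> F1 x *v u1 \<le> h + Gx x - F0 x *v u0}"

definition Yset ::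
  "real^'x::finite^'s::finite \<Rightarrow> real^('ny::finite + 'my::finite)^'s \<Rightarrow> real^'u::finite^'s \<Rightarrow> real^'s \<Rightarrow> (real^'my) set \<Rightarrow>
   real^'x \<Rightarrow> real^'u \<Rightarrow> (real^('ny + 'my)) set" where
  "Yset B1 B2 E d Yd x u = {y. y \<in> mixset Yd \<and> d - B1 *v x - E *v u \<le> B2 *v y}"

text \<open>inner value min_{y in Y(x,u)} c2 y (infimum in the extended reals; empty = +infinity)\<close>
definition recourse ::
  "real^'x::finite^'s::finite \<Rightarrow> real^('ny::finite + 'my::finite)^'s \<Rightarrow> real^'u::finite^'s \<Rightarrow> real^'s \<Rightarrow> (real^'my) set \<Rightarrow>
   real^('ny + 'my) \<Rightarrow> real^'x \<Rightarrow> real^'u \<Rightarrow> ereal" where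
  "recourse B1 B2 E d Yd c2 x u = (INF y \<in> Yset B1 B2 E d Yd x u. ereal (c2 \<bullet> y))"

end

theory Submission
  imports Defs
begin

text \<open>Fixing the first-stage uncertainty u0 at a point of U(x) can only weaken the
  adversary, so w_(u0,u1) \<le> w*; and any admissible u1 together with any recourse y
  is a feasible point of the relaxation, so w_R \<le> w_(u0,u1).\<close>

lemma U1set_iff_Uset:
  assumes "u0 \<in> mixset Ud0"
  shows "u1 \<in> U1set F0 F1 h Gx Ud1 x u0 \<longleftrightarrow> (u0, u1) \<in> Uset F0 F1 h Gx Ud0 Ud1 x"
proof -
  have "F0 x *v u0 + F1 x *v u1 \<le> h + Gx x \<longleftrightarrow> F1 x *v u1 \<le> h + Gx x - F0 x *v u0"
    by (simp add: less_eq_vec_def algebra_simps)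
  then show ?thesis
    using assms unfolding U1set_def Uset_def by auto
qed

lemma ereal_le_add_Inf:
  fixes a :: ereal
  assumes "\<And>s. s \<in> S \<Longrightarrow> a \<le> ereal c + s"
  shows "a \<le> ereal c + Inf S"
proof -
  have "a - ereal c \<le> Inf S"
    using assms by (intro Inf_greatest) (simp add: ereal_minus_le add.commute)
  then show ?thesis
    by (simp add: ereal_minus_le add.commute)
qed

lemma Inf_fixed_first_stage_le_INF_SUP:
  fixes f :: "'x \<Rightarrow> ereal" and g :: "'x \<Rightarrow> 'a \<Rightarrow> 'b \<Rightarrow> ereal"
  assumes U_ne: "\<And>x. x \<in> X \<Longrightarrow> U x \<noteq> {}"
    and U1_section: "\<And>x u0 u1' u1. (u0, u1') \<in> U x \<Longrightarrow> u1 \<in> U1 x u0 \<longleftrightarrow> (u0, u1) \<in> U x"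
  shows "Inf {f x + (SUP u1 \<in> U1 x u0. g x u0 u1) | x u0 u1'. x \<in> X \<and> (u0, u1') \<in> U x}
           \<le> (INF x \<in> X. f x + (SUP (u0, u1) \<in> U x. g x u0 u1))"
proof (rule INF_greatest)
  fix x assume x: "x \<in> X"
  then obtain u0 u1' where u: "(u0, u1') \<in> U x"
    using U_ne by fastforce
  have "(SUP u1 \<in> U1 x u0. g x u0 u1) \<le> (SUP (u0, u1) \<in> U x. g x u0 u1)"
    using U1_section[OF u] by (intro SUP_least) (auto intro: SUP_upper2)
  then have "f x + (SUP u1 \<in> U1 x u0. g x u0 u1) \<le> f x + (SUP (u0, u1) \<in> U x. g x u0 u1)"
    by (rule add_left_mono)
  then show "Inf {f x + (SUP u1 \<in> U1 x u0. g x u0 u1) | x u0 u1'. x \<in> X \<and> (u0, u1') \<in> U x}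
               \<le> f x + (SUP (u0, u1) \<in> U x. g x u0 u1)"
    using x u by (blast intro: Inf_lower2)
qed

lemma relaxation_le_Inf_fixed_first_stage:
  assumes U1_section: "\<And>x u0 u1' u1. (u0, u1') \<in> U x \<Longrightarrow> u1 \<in> U1 x u0 \<longleftrightarrow> (u0, u1) \<in> U x"
  shows "Inf {ereal (f x + g y) | x u0 u1 y. x \<in> X \<and> (u0, u1) \<in> U x \<and> y \<in> Y x u0 u1}
           \<le> Inf {ereal (f x) + (SUP u1 \<in> U1 x u0. INF y \<in> Y x u0 u1. ereal (g y)) | x u0 u1'.
                   x \<in> X \<and> (u0, u1') \<in> U x}"
    (is "?relax \<le> _")
proof (rule Inf_greatest, clarify)
  fix x u0 u1' assume x: "x \<in> X" and u: "(u0, u1') \<in> U x"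
  have "?relax \<le> ereal (f x + g y)" if "y \<in> Y x u0 u1'" for y
    using x u that by (blast intro: Inf_lower)
  then have "?relax \<le> ereal (f x) + (INF y \<in> Y x u0 u1'. ereal (g y))"
    by (intro ereal_le_add_Inf) auto
  also have "\<dots> \<le> ereal (f x) + (SUP u1 \<in> U1 x u0. INF y \<in> Y x u0 u1. ereal (g y))"
    using U1_section[OF u] u by (intro add_left_mono SUP_upper) simp
  finally show "?relax \<le> ereal (f x) + (SUP u1 \<in> U1 x u0. INF y \<in> Y x u0 u1. ereal (g y))" .
qed

theorem corollary7:
  fixes A :: "real^('nx::finite + 'mx::finite)^('r::finite)" and b :: "real^'r"
    and F0 :: "real^('nx + 'mx) \<Rightarrow> real^('n0::finite + 'd0::finite)^('k::finite)"
    and F1 :: "real^('nx + 'mx) \<Rightarrow> real^('n1::finite + 'd1::finite)^'k"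
    and h :: "real^'k" and G :: "real^('nx + 'mx)^'k"
    and Ud0 :: "(real^'d0) set" and Ud1 :: "(real^'d1) set"
    and B1 :: "real^('nx + 'mx)^('s::finite)"
    and B2 :: "real^('ny::finite + 'my::finite)^'s"
    and E :: "real^(('n0 + 'd0) + ('n1 + 'd1))^'s"
    and d :: "real^'s" and Yd :: "(real^'my) set"
    and c1 :: "real^('nx + 'mx)" and c2 :: "real^('ny + 'my)"
    and wstar wR wU :: ereal
  defines "X \<equiv> Xset A b"
    and "U \<equiv> Uset F0 F1 h (\<lambda>x. G *v x) Ud0 Ud1"
    and "U1 \<equiv> U1set F0 F1 h (\<lambda>x. G *v x) Ud1"
    and "Q \<equiv> recourse B1 B2 E d Yd c2"
  assumes Ud0: "Ud0 \<subseteq> nonneg_int_vecs" "bounded Ud0"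
    and Ud1: "Ud1 \<subseteq> nonneg_int_vecs" "bounded Ud1"
    and Yd: "Yd \<subseteq> nonneg_int_vecs" "bounded Yd"
    and U_ne: "\<And>x. x \<in> X \<Longrightarrow> U x \<noteq> {}"
    and U_bdd: "\<And>x. x \<in> X \<Longrightarrow> bounded (U x)"
    and wstar_def: "wstar = (INF x \<in> X. ereal (c1 \<bullet> x) + (SUP (u0, u1) \<in> U x. Q x (vjoin u0 u1)))"
    and wR_def: "wR = Inf {ereal (c1 \<bullet> x + c2 \<bullet> y) | x u0 u1 y.
                  x \<in> X \<and> (u0, u1) \<in> U x \<and> y \<in> Yset B1 B2 E d Yd x (vjoin u0 u1)}"
    and wR_fin: "wR > -\<infinity>"
    and wU_def: "wU = Inf {ereal (c1 \<bullet> x) + (SUP u1 \<in> U1 x u0. Q x (vjoin u0 u1)) | x u0 u1'.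
                  x \<in> X \<and> (u0, u1') \<in> U x}"
  shows "wR \<le> wU \<and> wU \<le> wstar \<and> (wU = \<infinity> \<longrightarrow> wstar = \<infinity>)"
proof -
  have U1_section: "u1 \<in> U1 x u0 \<longleftrightarrow> (u0, u1) \<in> U x" if "(u0, u1') \<in> U x" for x u0 u1' u1
  proof -
    have "u0 \<in> mixset Ud0"
      using that unfolding U_def Uset_def by simp
    then show ?thesis
      unfolding U_def U1_def by (rule U1set_iff_Uset)
  qed
  have "wR \<le> wU"
    unfolding wR_def wU_def Q_def recourse_def
    by (rule relaxation_le_Inf_fixed_first_stage[where f = "\<lambda>x. c1 \<bullet> x" and g = "\<lambda>y. c2 \<bullet> y"
        and Y = "\<lambda>x u0 u1. Yset B1 B2 E d Yd x (vjoin u0 u1)", OF U1_section])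
  moreover have "wU \<le> wstar"
    unfolding wU_def wstar_def
    by (rule Inf_fixed_first_stage_le_INF_SUP[where g = "\<lambda>x u0 u1. Q x (vjoin u0 u1)",
          OF U_ne U1_section])
  ultimately show ?thesis
    by (auto simp: top_unique)
qed

end
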